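(* Let $N\ge2$ and $\beta>0$. Then \[ \min\left\{r_\Omega^{-\beta}\,\frac1{|\Omega|}\int_\Omega d_\Omega^\beta\,dx:\ \Omega\subset\mathbb{R}^N\text{ bounded convex open set}\right\}=\binom{N+\beta}{N}^{-1}, \] and the minimum is attained by the unit ball $\Omega=B_1$.
   Context: $d_\Omega$ is the distance function from $\partial\Omega$, $r_\Omega$ the inradius (radius of the largest ball contained in $\Omega$), $|\Omega|$ the Lebesgue measure, and $\binom{N+\beta}{N}:=\frac{\Gamma(N+\beta+1)}{\Gamma(\beta+1)\Gamma(N+1)}$. *)

theory Defs
  imports "HOL-Analysis.Analysis"
begin

definition dist_bd :: "'a::euclidean_space set \<Rightarrow> 'a \<Rightarrow> real" where
  "dist_bd \<Omega> x = infdist x (frontier \<Omega>)"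

definition inradius :: "'a::euclidean_space set \<Rightarrow> real" where
  "inradius \<Omega> = Sup {r. \<exists>x. ball x r \<subseteq> \<Omega>}"

definition gen_binom :: "real \<Rightarrow> real \<Rightarrow> real" where
  "gen_binom a b = Gamma (a + b + 1) / (Gamma (b + 1) * Gamma (a + 1))"

definition torsion_ratio :: "real \<Rightarrow> 'a::euclidean_space set \<Rightarrow> real" where
  "torsion_ratio \<beta> \<Omega> =
     inradius \<Omega> powr (-\<beta>) * (1 / measure lebesgue \<Omega>) *
     integral \<Omega> (\<lambda>x. dist_bd \<Omega> x powr \<beta>)"

end

theory Submission
  imports Defs
begin

text \<open>If a convex set \<Omega> contains the ball of radius \<rho> around x0, the homothety with centre x0
  and ratio 1 - t/\<rho> maps \<Omega> into the superlevel set {d \<ge> t} of the distance d to the boundary,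
  so |{d \<ge> t}| \<ge> (1 - t/\<rho>)^N |\<Omega>| for 0 \<le> t \<le> \<rho>. By the layer cake formula the integral of
  d^\<beta> over \<Omega> equals the integral of \<beta> t^(\<beta>-1) |{d \<ge> t}| over t > 0, hence it is at least
  \<rho>^\<beta> \<beta> B(\<beta>, N+1) |\<Omega>|, and \<beta> B(\<beta>, N+1) is the reciprocal of the binomial coefficient.
  Letting \<rho> approach the inradius gives the lower bound. For a ball the superlevel sets are
  concentric balls, so the estimate is an equality.\<close>

section \<open>Layer cake and Beta integrals\<close>

lemma nn_integral_powr_Icc:
  assumes "0 \<le> a" "0 < \<beta>"
  shows "(\<integral>\<^sup>+t. indicator {0..a} t * ennreal (\<beta> * t powr (\<beta> - 1)) \<partial>lborel) = ennreal (a powr \<beta>)"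
proof -
  have "((\<lambda>t. t powr (\<beta> - 1)) has_integral (a powr \<beta> / \<beta>)) {0..a}"
    using has_integral_powr_from_0[of "\<beta> - 1" a] assms by simp
  from has_integral_mult_right[OF this, of \<beta>]
  have "((\<lambda>t. \<beta> * t powr (\<beta> - 1)) has_integral (a powr \<beta>)) {0..a}"
    using assms(2) by simp
  from nn_integral_has_integral_lebesgue[OF _ this]
  have "(\<integral>\<^sup>+t. ennreal (indicator {0..a} t * (\<beta> * t powr (\<beta> - 1))) \<partial>lborel) = ennreal (a powr \<beta>)"
    using assms by simp
  then show ?thesis
    by (simp add: indicator_mult_ennreal mult.commute)
qed

lemma nn_integral_powr_layer_cake:
  fixes f :: "'a \<Rightarrow> real"
  assumes "sigma_finite_measure M" and [measurable]: "f \<in> borel_measurable M" "\<Omega> \<in> sets M"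
    and \<beta>: "0 < \<beta>" and f_nonneg: "\<And>x. 0 \<le> f x"
  shows "(\<integral>\<^sup>+x. indicator \<Omega> x * ennreal (f x powr \<beta>) \<partial>M) =
    (\<integral>\<^sup>+t. indicator {0..} t * ennreal (\<beta> * t powr (\<beta> - 1)) * emeasure M {x\<in>\<Omega>. t \<le> f x} \<partial>lborel)"
proof -
  interpret pair_sigma_finite M lborel
    using assms(1) by (simp add: pair_sigma_finite_def lborel.sigma_finite_measure_axioms)
  let ?w = "\<lambda>t. ennreal (\<beta> * t powr (\<beta> - 1))"
  have "(\<integral>\<^sup>+x. indicator \<Omega> x * ennreal (f x powr \<beta>) \<partial>M) =
      (\<integral>\<^sup>+x. (\<integral>\<^sup>+t. indicator \<Omega> x * (indicator {0..f x} t * ?w t) \<partial>lborel) \<partial>M)"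
    by (intro nn_integral_cong, subst nn_integral_cmult)
      (auto simp: nn_integral_powr_Icc \<beta> f_nonneg)
  also have "\<dots> = (\<integral>\<^sup>+t. (\<integral>\<^sup>+x. indicator \<Omega> x * (indicator {0..f x} t * ?w t) \<partial>M) \<partial>lborel)"
  proof (rule Fubini'[symmetric])
    have "(\<lambda>(x, t). if x \<in> \<Omega> \<and> 0 \<le> t \<and> t \<le> f x then ?w t else 0) \<in> borel_measurable (M \<Otimes>\<^sub>M lborel)"
      by measurable
    then show "(\<lambda>(x, t). indicator \<Omega> x * (indicator {0..f x} t * ?w t))
        \<in> borel_measurable (M \<Otimes>\<^sub>M lborel)"
      by (rule measurable_cong[THEN iffD1, rotated]) (auto simp: indicator_def)
  qed
  also have "\<dots> = (\<integral>\<^sup>+t. indicator {0..} t * ?w t * emeasure M {x\<in>\<Omega>. t \<le> f x} \<partial>lborel)"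
  proof (intro nn_integral_cong)
    fix t :: real
    have "(\<integral>\<^sup>+x. indicator \<Omega> x * (indicator {0..f x} t * ?w t) \<partial>M) =
        (\<integral>\<^sup>+x. indicator {0..} t * ?w t * indicator {x\<in>\<Omega>. t \<le> f x} x \<partial>M)"
      by (intro nn_integral_cong) (auto simp: indicator_def)
    then show "(\<integral>\<^sup>+x. indicator \<Omega> x * (indicator {0..f x} t * ?w t) \<partial>M) =
        indicator {0..} t * ?w t * emeasure M {x\<in>\<Omega>. t \<le> f x}"
      by (simp add: nn_integral_cmult_indicator)
  qed
  finally show ?thesis .
qed

lemma has_integral_Beta_scaled:
  fixes N :: nat
  assumes "0 < \<beta>" "0 < r"
  shows "((\<lambda>t. t powr (\<beta> - 1) * (1 - t / r) ^ N) has_integral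
    r powr \<beta> * Beta \<beta> (real N + 1)) {0..r}"
proof -
  have "((\<lambda>s. s powr (\<beta> - 1) * (1 - s) powr (real N + 1 - 1)) has_integral
      Beta \<beta> (real N + 1)) {0..1}"
    using assms(1) by (intro has_integral_Beta_real) auto
  then have "((\<lambda>s. s powr (\<beta> - 1) * (1 - s) ^ N) has_integral Beta \<beta> (real N + 1)) {0..1}"
    by (rule has_integral_spike[of "{1}", rotated 2]) (auto simp: powr_realpow)
  from has_integral_stretch_real[OF this, of "1 / r"]
  have "((\<lambda>t. (t / r) powr (\<beta> - 1) * (1 - t / r) ^ N) has_integral r * Beta \<beta> (real N + 1)) {0..r}"
    using assms(2) by (simp add: image_mult_atLeastAtMost_if')
  from has_integral_mult_left[OF this, of "r powr (\<beta> - 1)"]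
  have "((\<lambda>t. t powr (\<beta> - 1) * (1 - t / r) ^ N) has_integral
      r * r powr (\<beta> - 1) * Beta \<beta> (real N + 1)) {0..r}"
    using assms(2) by (simp add: powr_divide mult_ac)
  moreover have "r * r powr (\<beta> - 1) = r powr \<beta>"
    using assms(2) by (simp add: powr_diff)
  ultimately show ?thesis
    by simp
qed

lemma nn_integral_Beta_scaled:
  fixes N :: nat
  assumes "0 < \<beta>" "0 < r"
  shows "(\<integral>\<^sup>+t. indicator {0..r} t * ennreal (\<beta> * t powr (\<beta> - 1) * (1 - t / r) ^ N) \<partial>lborel) =
    ennreal (r powr \<beta> * (\<beta> * Beta \<beta> (real N + 1)))"
proof -
  have "((\<lambda>t. \<beta> * t powr (\<beta> - 1) * (1 - t / r) ^ N) has_integral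
      r powr \<beta> * (\<beta> * Beta \<beta> (real N + 1))) {0..r}"
    using has_integral_mult_right[OF has_integral_Beta_scaled[OF assms], of \<beta> N]
    by (simp add: mult_ac)
  from nn_integral_has_integral_lebesgue[OF _ this]
  have "(\<integral>\<^sup>+t. ennreal (indicator {0..r} t * (\<beta> * t powr (\<beta> - 1) * (1 - t / r) ^ N)) \<partial>lborel) =
      ennreal (r powr \<beta> * (\<beta> * Beta \<beta> (real N + 1)))"
    using assms by simp
  then show ?thesis
    by (simp add: indicator_mult_ennreal mult.commute)
qed

lemma Beta_real_pos:
  fixes a b :: real
  assumes "0 < a" "0 < b"
  shows "0 < Beta a b"
  using assms by (simp add: Beta_def)

lemma inverse_gen_binom:
  assumes "0 < \<beta>"
  shows "inverse (gen_binom (real N) \<beta>) = \<beta> * Beta \<beta> (real N + 1)"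
proof -
  have "Gamma (\<beta> + 1) = \<beta> * Gamma \<beta>"
    using assms by (intro Gamma_plus1) (auto elim!: nonpos_Ints_cases)
  moreover have "0 < Gamma (real N + \<beta> + 1)"
    using assms by (intro Gamma_real_pos) simp
  ultimately show ?thesis
    using assms by (simp add: gen_binom_def Beta_def field_simps)
qed

section \<open>Distance to the boundary and inradius\<close>

lemma dist_bd_nonneg: "0 \<le> dist_bd \<Omega> x"
  by (simp add: dist_bd_def infdist_nonneg)

lemma borel_measurable_dist_bd [measurable]: "dist_bd \<Omega> \<in> borel_measurable borel"
  unfolding dist_bd_def
  by (intro borel_measurable_continuous_onI continuous_on_infdist continuous_on_id)

lemma frontier_bounded_nonempty:
  fixes \<Omega> :: "'a::euclidean_space set"
  assumes "bounded \<Omega>" "\<Omega> \<noteq> {}"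
  shows "frontier \<Omega> \<noteq> {}"
  using assms by (metis frontier_not_empty not_bounded_UNIV)

lemma ball_subset_imp_le_dist_bd:
  assumes "ball x \<rho> \<subseteq> \<Omega>" "frontier \<Omega> \<noteq> {}"
  shows "\<rho> \<le> dist_bd \<Omega> x"
proof -
  have "\<rho> \<le> dist x a" if "a \<in> frontier \<Omega>" for a
  proof -
    have "ball x \<rho> \<subseteq> interior \<Omega>"
      using assms(1) by (simp add: interior_maximal)
    then have "a \<notin> ball x \<rho>"
      using that by (auto simp: frontier_def)
    then show ?thesis by simp
  qed
  then show ?thesis
    unfolding dist_bd_def infdist_notempty[OF assms(2)] by (intro cINF_greatest assms(2))
qed

lemma ball_dist_bd_subset:
  assumes "x \<in> \<Omega>"
  shows "ball x (dist_bd \<Omega> x) \<subseteq> \<Omega>"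
proof (rule ccontr)
  assume not_subset: "\<not> ball x (dist_bd \<Omega> x) \<subseteq> \<Omega>"
  then have "0 < dist_bd \<Omega> x"
    by (metis ball_eq_empty empty_subsetI not_less)
  then have centre: "x \<in> ball x (dist_bd \<Omega> x)"
    by simp
  have "ball x (dist_bd \<Omega> x) \<inter> frontier \<Omega> \<noteq> {}"
    using connected_Int_frontier[OF connected_ball, of x _ \<Omega>] assms not_subset centre by blast
  then obtain a where "a \<in> frontier \<Omega>" "dist x a < infdist x (frontier \<Omega>)"
    by (auto simp: dist_bd_def)
  then show False
    using infdist_le[of a "frontier \<Omega>" x] by simp
qed

lemma dist_bd_ball:
  assumes "x \<in> ball c r"
  shows "dist_bd (ball c r) x = r - dist c x"
proof (rule antisym)
  have "ball x (dist_bd (ball c r) x) \<subseteq> ball c r"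
    using assms by (rule ball_dist_bd_subset)
  then show "dist_bd (ball c r) x \<le> r - dist c x"
    using assms dist_bd_nonneg[of "ball c r" x] by (auto simp: ball_subset_ball_iff dist_commute)
  have "0 < r"
    using le_less_trans[OF zero_le_dist assms[unfolded mem_ball]] .
  then have "frontier (ball c r) \<noteq> {}"
    by (intro frontier_bounded_nonempty) auto
  moreover have "ball x (r - dist c x) \<subseteq> ball c r"
    by (simp add: ball_subset_ball_iff dist_commute)
  ultimately show "r - dist c x \<le> dist_bd (ball c r) x"
    by (intro ball_subset_imp_le_dist_bd)
qed

lemma superlevel_dist_bd_ball:
  assumes "0 < t"
  shows "{x\<in>ball c r. t \<le> dist_bd (ball c r) x} = cball c (r - t)"
  using assms by (auto simp: dist_bd_ball)

lemma inradius_ge: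
  assumes "bounded \<Omega>" "ball x \<rho> \<subseteq> \<Omega>"
  shows "\<rho> \<le> inradius \<Omega>"
proof -
  obtain e c where \<Omega>: "\<Omega> \<subseteq> cball c e"
    using assms(1) bounded_subset_cball by blast
  have "\<rho> \<le> max e 0" if "ball x \<rho> \<subseteq> \<Omega>" for x \<rho>
    using subset_trans[OF that \<Omega>] zero_le_dist[of x c] unfolding ball_subset_cball_iff by arith
  then have "bdd_above {\<rho>. \<exists>x. ball x \<rho> \<subseteq> \<Omega>}"
    by (intro bdd_aboveI[of _ "max e 0"]) auto
  then show ?thesis
    unfolding inradius_def using assms(2) by (auto intro: cSup_upper)
qed

lemma inradius_le:
  assumes "0 \<le> K" "\<And>x \<rho>. 0 < \<rho> \<Longrightarrow> ball x \<rho> \<subseteq> \<Omega> \<Longrightarrow> \<rho> \<le> K"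
  shows "inradius \<Omega> \<le> K"
  unfolding inradius_def
proof (rule cSup_least)
  show "{\<rho>. \<exists>x. ball x \<rho> \<subseteq> \<Omega>} \<noteq> {}"
    by (auto intro: exI[of _ 0])
qed (use assms in \<open>force simp: not_less\<close>)

lemma inradius_powr_le:
  assumes "bounded \<Omega>" "0 < \<beta>" "0 \<le> M" "\<And>x \<rho>. 0 < \<rho> \<Longrightarrow> ball x \<rho> \<subseteq> \<Omega> \<Longrightarrow> \<rho> powr \<beta> \<le> M"
  shows "inradius \<Omega> powr \<beta> \<le> M"
proof -
  have "inradius \<Omega> \<le> M powr (1 / \<beta>)"
  proof (rule inradius_le)
    fix x \<rho> assume "0 < \<rho>" "ball x \<rho> \<subseteq> \<Omega>"
    then have "(\<rho> powr \<beta>) powr (1 / \<beta>) \<le> M powr (1 / \<beta>)"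
      using assms(2,4) by (intro powr_mono2) auto
    then show "\<rho> \<le> M powr (1 / \<beta>)"
      using \<open>0 < \<rho>\<close> assms(2) by (simp add: powr_powr)
  qed simp
  moreover have "0 \<le> inradius \<Omega>"
    using inradius_ge[OF assms(1), of _ 0] by simp
  ultimately have "inradius \<Omega> powr \<beta> \<le> (M powr (1 / \<beta>)) powr \<beta>"
    using assms(2) by (intro powr_mono2) auto
  also have "\<dots> = M"
    using assms(2,3) by (simp add: powr_powr)
  finally show ?thesis .
qed

lemma inradius_pos:
  assumes "bounded \<Omega>" "open \<Omega>" "\<Omega> \<noteq> {}"
  shows "0 < inradius \<Omega>"
proof -
  obtain x e where "0 < e" "ball x e \<subseteq> \<Omega>"
    using assms(2,3) by (meson all_not_in_conv openE)
  then show ?thesis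
    using inradius_ge[OF assms(1)] by fastforce
qed

lemma inradius_ball:
  assumes "0 < r"
  shows "inradius (ball c r) = r"
proof (rule antisym)
  show "inradius (ball c r) \<le> r"
  proof (rule inradius_le)
    fix x \<rho> assume "0 < \<rho>" "ball x \<rho> \<subseteq> ball c r"
    then have "dist x c + \<rho> \<le> r"
      by (simp add: ball_subset_ball_iff)
    then show "\<rho> \<le> r"
      using zero_le_dist[of x c] by linarith
  qed (use assms in simp)
  show "r \<le> inradius (ball c r)"
    by (intro inradius_ge) auto
qed

lemma dist_bd_le_inradius:
  assumes "bounded \<Omega>" "x \<in> \<Omega>"
  shows "dist_bd \<Omega> x \<le> inradius \<Omega>"
  using inradius_ge[OF assms(1) ball_dist_bd_subset[OF assms(2)]] .

lemma measure_lebesgue_open_pos: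
  fixes \<Omega> :: "'a::euclidean_space set"
  assumes "bounded \<Omega>" "open \<Omega>" "\<Omega> \<noteq> {}"
  shows "0 < measure lebesgue \<Omega>"
proof -
  obtain x e where "0 < e" "ball x e \<subseteq> \<Omega>"
    using assms(2,3) by (meson all_not_in_conv openE)
  then have "measure lebesgue (ball x e) \<le> measure lebesgue \<Omega>"
    using assms(1,2) by (intro measure_mono_fmeasurable lmeasurable_open) auto
  moreover have "0 < measure lebesgue (ball x e)"
    using content_ball_pos[OF \<open>0 < e\<close>] by simp
  ultimately show ?thesis
    by linarith
qed

lemma dist_bd_powr_integrable_on:
  fixes \<Omega> :: "'a::euclidean_space set"
  assumes "bounded \<Omega>" "open \<Omega>" "0 \<le> \<beta>"
  shows "(\<lambda>x. dist_bd \<Omega> x powr \<beta>) integrable_on \<Omega>"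
proof (rule measurable_bounded_by_integrable_imp_integrable_real)
  show "(\<lambda>x. dist_bd \<Omega> x powr \<beta>) \<in> borel_measurable (lebesgue_on \<Omega>)"
    by (intro measurable_restrict_space1 measurable_completion) measurable
  show "(\<lambda>x. inradius \<Omega> powr \<beta>) integrable_on \<Omega>"
    using assms(1,2) by (intro integrable_on_const lmeasurable_open)
  show "\<bar>dist_bd \<Omega> x powr \<beta>\<bar> \<le> inradius \<Omega> powr \<beta>" if "x \<in> \<Omega>" for x
    using dist_bd_le_inradius[OF assms(1) that] assms(3) by (simp add: dist_bd_nonneg powr_mono2)
  show "\<Omega> \<in> sets lebesgue"
    using assms(2) by simp
qed

lemma nn_integral_dist_bd_powr:
  fixes \<Omega> :: "'a::euclidean_space set"
  assumes "bounded \<Omega>" "open \<Omega>" "0 \<le> \<beta>"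
  shows "(\<integral>\<^sup>+x. indicator \<Omega> x * ennreal (dist_bd \<Omega> x powr \<beta>) \<partial>lborel) =
    ennreal (integral \<Omega> (\<lambda>x. dist_bd \<Omega> x powr \<beta>))"
proof -
  have "((\<lambda>x. dist_bd \<Omega> x powr \<beta>) has_integral integral \<Omega> (\<lambda>x. dist_bd \<Omega> x powr \<beta>)) \<Omega>"
    using dist_bd_powr_integrable_on[OF assms] by (rule integrable_integral)
  from nn_integral_has_integral_lebesgue[OF _ this] show ?thesis
    by (simp add: dist_bd_nonneg indicator_mult_ennreal mult.commute)
qed

lemma integral_dist_bd_powr_nonneg:
  fixes \<Omega> :: "'a::euclidean_space set"
  assumes "bounded \<Omega>" "open \<Omega>" "0 \<le> \<beta>"
  shows "0 \<le> integral \<Omega> (\<lambda>x. dist_bd \<Omega> x powr \<beta>)"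
  using dist_bd_powr_integrable_on[OF assms] by (simp add: integral_nonneg dist_bd_nonneg)

section \<open>Convex domains\<close>

lemma convex_shrink_ball_subset:
  fixes \<Omega> :: "'a::real_normed_vector set"
  assumes "convex \<Omega>" "ball x0 \<rho> \<subseteq> \<Omega>" "y \<in> \<Omega>" "0 \<le> l" "l \<le> 1"
  shows "ball ((1 - l) *\<^sub>R y + l *\<^sub>R x0) (l * \<rho>) \<subseteq> \<Omega>"
proof
  fix w assume w: "w \<in> ball ((1 - l) *\<^sub>R y + l *\<^sub>R x0) (l * \<rho>)"
  then have "0 < l"
    using assms(4) by (cases "l = 0") auto
  define v where "v = x0 + (1 / l) *\<^sub>R (w - ((1 - l) *\<^sub>R y + l *\<^sub>R x0))"
  have "dist x0 v = norm (w - ((1 - l) *\<^sub>R y + l *\<^sub>R x0)) / l"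
    using \<open>0 < l\<close> by (simp add: v_def dist_norm)
  also have "\<dots> < \<rho>"
    using w \<open>0 < l\<close> by (simp add: dist_norm norm_minus_commute divide_less_eq mult.commute)
  finally have "v \<in> \<Omega>"
    using assms(2) by auto
  moreover have "w = (1 - l) *\<^sub>R y + l *\<^sub>R v"
    using \<open>0 < l\<close> by (simp add: v_def algebra_simps)
  ultimately show "w \<in> \<Omega>"
    using convexD[OF assms(1,3), of v "1 - l" l] assms(4,5) by simp
qed

lemma emeasure_superlevel_dist_bd_ge:
  fixes \<Omega> :: "'a::euclidean_space set"
  assumes "convex \<Omega>" "open \<Omega>" "bounded \<Omega>" "ball x0 \<rho> \<subseteq> \<Omega>" "0 \<le> t" "t \<le> \<rho>"
  shows "ennreal ((1 - t / \<rho>) ^ DIM('a)) * emeasure lborel \<Omega> \<le>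
    emeasure lborel {x\<in>\<Omega>. t \<le> dist_bd \<Omega> x}"
proof (cases "\<rho> = 0")
  case False
  define l where "l = t / \<rho>"
  have l: "0 \<le> l" "l \<le> 1"
    using assms(5,6) False by (auto simp: l_def)
  have "x0 \<in> \<Omega>"
    using assms(4,5,6) False by auto
  have frontier: "frontier \<Omega> \<noteq> {}"
    using \<open>x0 \<in> \<Omega>\<close> assms(3) by (intro frontier_bounded_nonempty) auto
  have shrink: "(\<lambda>y. (1 - l) *\<^sub>R y + l *\<^sub>R x0) ` \<Omega> \<subseteq> {x\<in>\<Omega>. t \<le> dist_bd \<Omega> x}"
  proof safe
    fix y assume "y \<in> \<Omega>"
    then show "(1 - l) *\<^sub>R y + l *\<^sub>R x0 \<in> \<Omega>"
      using convexD[OF assms(1) _ \<open>x0 \<in> \<Omega>\<close>, of y "1 - l" l] l by simp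
    have "l * \<rho> \<le> dist_bd \<Omega> ((1 - l) *\<^sub>R y + l *\<^sub>R x0)"
      using convex_shrink_ball_subset[OF assms(1,4) \<open>y \<in> \<Omega>\<close> l] frontier
      by (rule ball_subset_imp_le_dist_bd)
    then show "t \<le> dist_bd \<Omega> ((1 - l) *\<^sub>R y + l *\<^sub>R x0)"
      using False by (simp add: l_def)
  qed
  have "ennreal ((1 - t / \<rho>) ^ DIM('a)) * emeasure lborel \<Omega> =
      emeasure lebesgue ((\<lambda>y. (1 - l) *\<^sub>R y + l *\<^sub>R x0) ` \<Omega>)"
    using l assms(2) by (simp add: emeasure_lebesgue_affine l_def ennreal_power)
  also have "\<dots> \<le> emeasure lebesgue {x\<in>\<Omega>. t \<le> dist_bd \<Omega> x}"
    using shrink assms(2) by (intro emeasure_mono) auto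
  finally show ?thesis
    using assms(2) by simp
qed (use assms in \<open>simp add: dist_bd_nonneg\<close>)

lemma nn_integral_dist_bd_powr_ge:
  fixes \<Omega> :: "'a::euclidean_space set"
  assumes "convex \<Omega>" "open \<Omega>" "bounded \<Omega>" "ball x0 \<rho> \<subseteq> \<Omega>" "0 < \<rho>" "0 < \<beta>"
  shows "ennreal (\<rho> powr \<beta> * (\<beta> * Beta \<beta> (real DIM('a) + 1))) * emeasure lborel \<Omega> \<le>
    (\<integral>\<^sup>+x. indicator \<Omega> x * ennreal (dist_bd \<Omega> x powr \<beta>) \<partial>lborel)"
proof -
  have [measurable]: "\<Omega> \<in> sets borel"
    using assms(2) by simp
  let ?w = "\<lambda>t. \<beta> * t powr (\<beta> - 1)"
  have "ennreal (\<rho> powr \<beta> * (\<beta> * Beta \<beta> (real DIM('a) + 1))) * emeasure lborel \<Omega> =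
      (\<integral>\<^sup>+t. indicator {0..\<rho>} t * ennreal (?w t * (1 - t / \<rho>) ^ DIM('a)) \<partial>lborel) *
      emeasure lborel \<Omega>"
    using assms(5,6) by (simp add: nn_integral_Beta_scaled)
  also have "\<dots> = (\<integral>\<^sup>+t. indicator {0..\<rho>} t * ennreal (?w t * (1 - t / \<rho>) ^ DIM('a)) *
      emeasure lborel \<Omega> \<partial>lborel)"
    by (rule nn_integral_multc[symmetric]) measurable
  also have "\<dots> \<le> (\<integral>\<^sup>+t. indicator {0..} t * ennreal (?w t) *
      emeasure lborel {x\<in>\<Omega>. t \<le> dist_bd \<Omega> x} \<partial>lborel)"
  proof (intro nn_integral_mono)
    fix t :: real
    show "indicator {0..\<rho>} t * ennreal (?w t * (1 - t / \<rho>) ^ DIM('a)) * emeasure lborel \<Omega> \<le>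
        indicator {0..} t * ennreal (?w t) * emeasure lborel {x\<in>\<Omega>. t \<le> dist_bd \<Omega> x}"
    proof (cases "t \<in> {0..\<rho>}")
      case True
      then have "ennreal (?w t * (1 - t / \<rho>) ^ DIM('a)) * emeasure lborel \<Omega> =
          ennreal (?w t) * (ennreal ((1 - t / \<rho>) ^ DIM('a)) * emeasure lborel \<Omega>)"
        using assms(5,6) by (simp add: ennreal_mult mult.assoc)
      also have "\<dots> \<le> ennreal (?w t) * emeasure lborel {x\<in>\<Omega>. t \<le> dist_bd \<Omega> x}"
        using True by (intro mult_left_mono emeasure_superlevel_dist_bd_ge[OF assms(1-4)]) auto
      finally show ?thesis
        using True by simp
    qed simp
  qed
  also have "\<dots> = (\<integral>\<^sup>+x. indicator \<Omega> x * ennreal (dist_bd \<Omega> x powr \<beta>) \<partial>lborel)"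
    using assms(6) lborel.sigma_finite_measure_axioms
    by (intro nn_integral_powr_layer_cake[symmetric]) (auto simp: dist_bd_nonneg)
  finally show ?thesis .
qed

lemma integral_dist_bd_powr_ge:
  fixes \<Omega> :: "'a::euclidean_space set"
  assumes "convex \<Omega>" "open \<Omega>" "bounded \<Omega>" "ball x0 \<rho> \<subseteq> \<Omega>" "0 < \<rho>" "0 < \<beta>"
  shows "\<rho> powr \<beta> * (\<beta> * Beta \<beta> (real DIM('a) + 1)) * measure lebesgue \<Omega> \<le>
    integral \<Omega> (\<lambda>x. dist_bd \<Omega> x powr \<beta>)"
proof -
  have "ennreal (\<rho> powr \<beta> * (\<beta> * Beta \<beta> (real DIM('a) + 1)) * measure lebesgue \<Omega>) =
      ennreal (\<rho> powr \<beta> * (\<beta> * Beta \<beta> (real DIM('a) + 1))) * emeasure lborel \<Omega>"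
    using emeasure_eq_measure2[OF lmeasurable_open[OF assms(3,2)]] assms(2)
    by (simp add: ennreal_mult'')
  also have "\<dots> \<le> (\<integral>\<^sup>+x. indicator \<Omega> x * ennreal (dist_bd \<Omega> x powr \<beta>) \<partial>lborel)"
    by (rule nn_integral_dist_bd_powr_ge[OF assms])
  also have "\<dots> = ennreal (integral \<Omega> (\<lambda>x. dist_bd \<Omega> x powr \<beta>))"
    using assms(2,3,6) by (simp add: nn_integral_dist_bd_powr)
  finally show ?thesis
    using assms(2,3,6) by (simp add: ennreal_le_iff integral_dist_bd_powr_nonneg)
qed

lemma torsion_ratio_ge:
  fixes \<Omega> :: "'a::euclidean_space set"
  assumes "bounded \<Omega>" "convex \<Omega>" "open \<Omega>" "\<Omega> \<noteq> {}" "0 < \<beta>"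
  shows "\<beta> * Beta \<beta> (real DIM('a) + 1) \<le> torsion_ratio \<beta> \<Omega>"
proof -
  define c where "c = \<beta> * Beta \<beta> (real DIM('a) + 1)"
  define I where "I = integral \<Omega> (\<lambda>x. dist_bd \<Omega> x powr \<beta>)"
  define m where "m = measure lebesgue \<Omega>"
  have "0 < c"
    using assms(5) Beta_real_pos[of \<beta> "real DIM('a) + 1"] by (simp add: c_def)
  have "0 < m"
    using measure_lebesgue_open_pos[OF assms(1,3,4)] by (simp add: m_def)
  have "0 \<le> I"
    using assms(1,3,5) by (simp add: I_def integral_dist_bd_powr_nonneg)
  have "inradius \<Omega> powr \<beta> \<le> I / (c * m)"
  proof (rule inradius_powr_le[OF assms(1,5)])
    show "0 \<le> I / (c * m)"
      using \<open>0 < c\<close> \<open>0 < m\<close> \<open>0 \<le> I\<close> by simp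
    fix x \<rho> assume \<rho>: "0 < \<rho>" "ball x \<rho> \<subseteq> \<Omega>"
    have "\<rho> powr \<beta> * (c * m) \<le> I"
      using integral_dist_bd_powr_ge[OF assms(2,3,1) \<rho>(2,1) assms(5)]
      unfolding c_def I_def m_def by (simp add: mult.assoc)
    then show "\<rho> powr \<beta> \<le> I / (c * m)"
      using \<open>0 < c\<close> \<open>0 < m\<close> by (simp add: pos_le_divide_eq)
  qed
  moreover have "0 < inradius \<Omega>"
    using inradius_pos[OF assms(1,3,4)] .
  ultimately have "c \<le> I / (m * inradius \<Omega> powr \<beta>)"
    using \<open>0 < c\<close> \<open>0 < m\<close> by (simp add: field_simps)
  also have "\<dots> = torsion_ratio \<beta> \<Omega>"
    by (simp add: torsion_ratio_def I_def m_def powr_minus_divide)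
  finally show ?thesis
    unfolding c_def .
qed

section \<open>Balls\<close>

lemma emeasure_superlevel_dist_bd_ball:
  fixes c :: "'a::euclidean_space"
  assumes "0 \<le> t" "t \<le> r"
  shows "emeasure lborel {x\<in>ball c r. t \<le> dist_bd (ball c r) x} =
    ennreal ((1 - t / r) ^ DIM('a)) * emeasure lborel (ball c r)"
proof (cases "t = 0")
  case True
  then have "{x\<in>ball c r. t \<le> dist_bd (ball c r) x} = ball c r"
    by (auto simp: dist_bd_nonneg)
  then show ?thesis
    using True by simp
next
  case False
  then have "0 < t" "0 < r"
    using assms by auto
  have "(1 - t / r) * r = r - t"
    using \<open>0 < r\<close> by (simp add: field_simps)
  then have "(1 - t / r) ^ DIM('a) * r ^ DIM('a) = (r - t) ^ DIM('a)"
    by (metis power_mult_distrib)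
  then have "ennreal ((1 - t / r) ^ DIM('a)) * emeasure lborel (ball c r) =
      emeasure lborel (cball c (r - t))"
    using assms \<open>0 < r\<close>
    by (simp add: emeasure_ball emeasure_cball ennreal_mult''[symmetric] mult_ac)
  then show ?thesis
    unfolding superlevel_dist_bd_ball[OF \<open>0 < t\<close>] by simp
qed

lemma nn_integral_dist_bd_powr_ball:
  fixes c :: "'a::euclidean_space"
  assumes "0 < r" "0 < \<beta>"
  shows "(\<integral>\<^sup>+x. indicator (ball c r) x * ennreal (dist_bd (ball c r) x powr \<beta>) \<partial>lborel) =
    ennreal (r powr \<beta> * (\<beta> * Beta \<beta> (real DIM('a) + 1))) * emeasure lborel (ball c r)"
proof -
  let ?B = "ball c r" and ?w = "\<lambda>t. \<beta> * t powr (\<beta> - 1)"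
  have superlevel: "indicator {0..} t * ennreal (?w t) * emeasure lborel {x\<in>?B. t \<le> dist_bd ?B x} =
      indicator {0..r} t * ennreal (?w t * (1 - t / r) ^ DIM('a)) * emeasure lborel ?B" for t
  proof -
    consider "t < 0" | "0 \<le> t" "t \<le> r" | "r < t"
      by linarith
    then show ?thesis
    proof cases
      case 2
      then show ?thesis
        using assms by (subst emeasure_superlevel_dist_bd_ball) (auto simp: ennreal_mult mult.assoc)
    next
      case 3
      then show ?thesis
        using assms by (subst superlevel_dist_bd_ball) auto
    qed simp
  qed
  have "(\<integral>\<^sup>+x. indicator ?B x * ennreal (dist_bd ?B x powr \<beta>) \<partial>lborel) =
      (\<integral>\<^sup>+t. indicator {0..} t * ennreal (?w t) * emeasure lborel {x\<in>?B. t \<le> dist_bd ?B x} \<partial>lborel)"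
    using assms(2) lborel.sigma_finite_measure_axioms
    by (intro nn_integral_powr_layer_cake) (auto simp: dist_bd_nonneg)
  also have "\<dots> = (\<integral>\<^sup>+t. indicator {0..r} t * ennreal (?w t * (1 - t / r) ^ DIM('a)) *
      emeasure lborel ?B \<partial>lborel)"
    by (simp only: superlevel)
  also have "\<dots> = (\<integral>\<^sup>+t. indicator {0..r} t * ennreal (?w t * (1 - t / r) ^ DIM('a)) \<partial>lborel) *
      emeasure lborel ?B"
    by (rule nn_integral_multc) measurable
  also have "\<dots> = ennreal (r powr \<beta> * (\<beta> * Beta \<beta> (real DIM('a) + 1))) * emeasure lborel ?B"
    using assms by (simp add: nn_integral_Beta_scaled)
  finally show ?thesis .
qed

lemma integral_dist_bd_powr_ball:
  fixes c :: "'a::euclidean_space"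
  assumes "0 < r" "0 < \<beta>"
  shows "integral (ball c r) (\<lambda>x. dist_bd (ball c r) x powr \<beta>) =
    r powr \<beta> * (\<beta> * Beta \<beta> (real DIM('a) + 1)) * measure lebesgue (ball c r)"
proof -
  have "ennreal (integral (ball c r) (\<lambda>x. dist_bd (ball c r) x powr \<beta>)) =
      ennreal (r powr \<beta> * (\<beta> * Beta \<beta> (real DIM('a) + 1)) * measure lebesgue (ball c r))"
    using assms Beta_real_pos[of \<beta> "real DIM('a) + 1"]
    by (simp flip: nn_integral_dist_bd_powr
        add: nn_integral_dist_bd_powr_ball emeasure_ball content_ball ennreal_mult'')
  then show ?thesis
    using assms Beta_real_pos[of \<beta> "real DIM('a) + 1"]
    by (subst (asm) ennreal_inj) (auto simp: integral_dist_bd_powr_nonneg)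
qed

lemma torsion_ratio_ball:
  fixes c :: "'a::euclidean_space"
  assumes "0 < r" "0 < \<beta>"
  shows "torsion_ratio \<beta> (ball c r) = \<beta> * Beta \<beta> (real DIM('a) + 1)"
proof -
  have "0 < measure lebesgue (ball c r)"
    using assms(1) by (intro measure_lebesgue_open_pos) auto
  then show ?thesis
    using assms
    by (simp add: torsion_ratio_def inradius_ball integral_dist_bd_powr_ball powr_minus_divide)
qed

theorem proposition2p6:
  fixes \<beta> :: real
  assumes "DIM('n::euclidean_space) \<ge> 2" and "\<beta> > 0"
  shows "(\<forall>\<Omega>::'n set. bounded \<Omega> \<and> convex \<Omega> \<and> open \<Omega> \<and> \<Omega> \<noteq> {} \<longrightarrow>
            inverse (gen_binom (real DIM('n)) \<beta>) \<le> torsion_ratio \<beta> \<Omega>)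
         \<and> torsion_ratio \<beta> (ball (0::'n) 1) = inverse (gen_binom (real DIM('n)) \<beta>)"
  using torsion_ratio_ge[OF _ _ _ _ assms(2), where 'a='n]
    torsion_ratio_ball[OF zero_less_one assms(2), of "0::'n"]
  by (simp add: inverse_gen_binom[OF assms(2)])

end
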